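(* In the two-bidder, two-configuration asymmetric setting below, assume $0<p<1$ and $r_1>r'_1>r'_2>r_2$ (uniform winner with incongruent loser). Write $p'=1-p$. Then there exist $q\in(0,p)$ and $q'\in(0,p')$ such that, with $$x=\frac{(p-q)r_2+q'r'_2}{p-q+q'},\quad y=\frac{qr_2+(p'-q')r'_2}{q+p'-q'},\quad z=\frac{qr_1+q'r'_1}{q+q'},$$ one has $x<y\le z$, and the information structure that sends, when the CTR vector is $(r_1,r_2)$, signal $(r_1,x)$ with probability $p-q$ and $(z,y)$ with probability $q$, and, when the CTR vector is $(r'_1,r'_2)$, signal $(z,x)$ with probability $q'$ and $(r'_1,y)$ with probability $p'-q'$, is calibrated, partially bundles both bidders (so is interior), and has revenue strictly larger than both full disclosure and no disclosure.
   Context: Setting. Two bidders with values $v_1=v_2=1$. The CTR vector equals $(r_1,r_2)$ with probability $p$ and $(r'_1,r'_2)$ with probability $1-p$, all entries in $[0,1]$, labeled so that $r_1\ge r'_1,r_2,r'_2$. An information structure is a finitely supported probability distribution on pairs $(r,s)\in[0,1]^2\times[0,1]^2$ whose $r$-marginal is this prior (the probabilities above are joint probabilities of (CTR vector, signal)). Given signals $s$, the winner $i^*$ maximizes $s_i$ (uniform tie-breaking), pays per click $s_j/s_{i^*}$ with $j\ne i^*$ (revenue $0$ if $s_{i^*}=0$), only upon a click, which occurs with probability $r_{i^*}$; revenue is $\mathbb{E}[r_{i^*}p_{i^*}]$. Calibrated: $\mathbb{E}[r_i\mid s_i=t]=t$ for every $i$ and every $t$ with $\Pr[s_i=t]>0$.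 Full disclosure: $s=r$ a.s.; no disclosure: $s_i=\mathbb{E}[r_i]$ a.s. Bidder $i$ is unbundled if $s_i=r_i$ a.s., fully bundled if $s_i=\mathbb{E}[r_i]$ a.s., and partially bundled otherwise; a structure is interior if both bidders are partially bundled. *)

theory Defs
  imports Complex_Main
begin

text \<open>A CTR vector / signal vector for two bidders is a pair of reals.
  A point of an information structure is a pair (r, s) of a CTR vector r and a
  signal vector s. An information structure is represented by its (joint)
  probability mass function on such points, required to have finite support.\<close>

type_synonym vec2 = "real \<times> real"
type_synonym point = "vec2 \<times> vec2"
type_synonym dist = "point \<Rightarrow> real"

definition comp :: "nat \<Rightarrow> vec2 \<Rightarrow> real" where
  "comp i v = (if i = 1 then fst v else snd v)"

definition supp :: "dist \<Rightarrow> point set" where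
  "supp \<mu> = {w. \<mu> w \<noteq> 0}"

definition prior :: "real \<Rightarrow> vec2 \<Rightarrow> vec2 \<Rightarrow> vec2 \<Rightarrow> real" where
  "prior p R R' r = (if r = R then p else 0) + (if r = R' then 1 - p else 0)"

definition in01 :: "vec2 \<Rightarrow> bool" where
  "in01 v \<longleftrightarrow> fst v \<in> {0..1} \<and> snd v \<in> {0..1}"

definition is_info_structure :: "(vec2 \<Rightarrow> real) \<Rightarrow> dist \<Rightarrow> bool" where
  "is_info_structure P \<mu> \<longleftrightarrow>
     finite (supp \<mu>) \<and> (\<forall>w. 0 \<le> \<mu> w) \<and>
     (\<forall>w\<in>supp \<mu>. in01 (fst w) \<and> in01 (snd w)) \<and>
     (\<forall>r. (\<Sum>w\<in>supp \<mu>. if fst w = r then \<mu> w else 0) = P r)"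

definition Ectr :: "dist \<Rightarrow> nat \<Rightarrow> real" where
  "Ectr \<mu> i = (\<Sum>w\<in>supp \<mu>. \<mu> w * comp i (fst w))"

definition calibrated :: "dist \<Rightarrow> bool" where
  "calibrated \<mu> \<longleftrightarrow>
     (\<forall>i\<in>{1,2::nat}. \<forall>t.
        (\<Sum>w\<in>supp \<mu>. if comp i (snd w) = t then \<mu> w else 0) > 0 \<longrightarrow>
        (\<Sum>w\<in>supp \<mu>. if comp i (snd w) = t then \<mu> w * comp i (fst w) else 0)
          = t * (\<Sum>w\<in>supp \<mu>. if comp i (snd w) = t then \<mu> w else 0))"

definition unbundled :: "dist \<Rightarrow> nat \<Rightarrow> bool" where
  "unbundled \<mu> i \<longleftrightarrow> (\<forall>w\<in>supp \<mu>. comp i (snd w) = comp i (fst w))"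

definition fully_bundled :: "dist \<Rightarrow> nat \<Rightarrow> bool" where
  "fully_bundled \<mu> i \<longleftrightarrow> (\<forall>w\<in>supp \<mu>. comp i (snd w) = Ectr \<mu> i)"

definition partially_bundled :: "dist \<Rightarrow> nat \<Rightarrow> bool" where
  "partially_bundled \<mu> i \<longleftrightarrow> \<not> unbundled \<mu> i \<and> \<not> fully_bundled \<mu> i"

definition interior :: "dist \<Rightarrow> bool" where
  "interior \<mu> \<longleftrightarrow> partially_bundled \<mu> 1 \<and> partially_bundled \<mu> 2"

text \<open>Expected payment of bidder i if it wins at point w: per-click price
  s_j / s_i (0 if s_i = 0) times click probability r_i.\<close>
definition pay :: "nat \<Rightarrow> point \<Rightarrow> real" where
  "pay i w = (let j = (if i = 1 then 2 else 1 :: nat) in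
     if comp i (snd w) = 0 then 0
     else comp i (fst w) * (comp j (snd w) / comp i (snd w)))"

definition point_rev :: "point \<Rightarrow> real" where
  "point_rev w =
     (if fst (snd w) > snd (snd w) then pay 1 w
      else if snd (snd w) > fst (snd w) then pay 2 w
      else (pay 1 w + pay 2 w) / 2)"

definition revenue :: "dist \<Rightarrow> real" where
  "revenue \<mu> = (\<Sum>w\<in>supp \<mu>. \<mu> w * point_rev w)"

definition full_disclosure :: "(vec2 \<Rightarrow> real) \<Rightarrow> dist" where
  "full_disclosure P w = (if snd w = fst w then P (fst w) else 0)"

definition prior_mean :: "(vec2 \<Rightarrow> real) \<Rightarrow> nat \<Rightarrow> real" where
  "prior_mean P i = (\<Sum>r\<in>{r. P r \<noteq> 0}. P r * comp i r)"

definition no_disclosure :: "(vec2 \<Rightarrow> real) \<Rightarrow> dist" where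
  "no_disclosure P w =
     (if snd w = (prior_mean P 1, prior_mean P 2) then P (fst w) else 0)"

definition delta :: "point \<Rightarrow> real \<Rightarrow> dist" where
  "delta a m w = (if w = a then m else 0)"

end

theory Submission
  imports Defs
begin

text \<open>In the scheme, as under full and no disclosure, bidder 1 wins at every signal, and the
  latter two both earn E[r_2]. Calibration makes bidder 2's signal average to E[r_2] too, so the
  scheme's gain is what bidder 1 pays beyond s_2 at the two points with the pooled signal z.
  Because z averages r_1 and r_1' with the same weights q, q' that those points carry,
  this gain is q q' (r_1 - r_1') (y - x) / ((q + q') z), positive as soon as x < y.\<close>

lemma point_rev_first_wins:
  assumes "snd s < fst s" "fst s \<noteq> 0"
  shows "point_rev (r, s) = fst r * (snd s / fst s)"
  using assms by (simp add: point_rev_def pay_def comp_def)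

lemma revenue_full_disclosure:
  assumes fin: "finite {r. P r \<noteq> 0}"
    and first_wins: "\<And>r. P r \<noteq> 0 \<Longrightarrow> 0 \<le> snd r \<and> snd r < fst r"
  shows "revenue (full_disclosure P) = prior_mean P 2"
proof -
  have supp: "supp (full_disclosure P) = (\<lambda>r. (r, r)) ` {r. P r \<noteq> 0}"
    by (auto simp: supp_def full_disclosure_def split: if_splits)
  have "revenue (full_disclosure P) = (\<Sum>r\<in>{r. P r \<noteq> 0}. P r * point_rev (r, r))"
    unfolding revenue_def supp by (subst sum.reindex) (auto simp: inj_on_def full_disclosure_def)
  also have "\<dots> = (\<Sum>r\<in>{r. P r \<noteq> 0}. P r * comp 2 r)"
  proof (rule sum.cong)
    fix r assume "r \<in> {r. P r \<noteq> 0}"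
    with first_wins have "0 \<le> snd r" "snd r < fst r" by auto
    then show "P r * point_rev (r, r) = P r * comp 2 r"
      by (simp add: point_rev_first_wins comp_def)
  qed simp
  finally show ?thesis unfolding prior_mean_def .
qed

lemma revenue_no_disclosure:
  assumes fin: "finite {r. P r \<noteq> 0}"
    and "0 \<le> prior_mean P 2" "prior_mean P 2 < prior_mean P 1"
  shows "revenue (no_disclosure P) = prior_mean P 2"
proof -
  define m where "m = (prior_mean P 1, prior_mean P 2)"
  have m_first_wins: "snd m < fst m" "fst m \<noteq> 0" using assms(2,3) by (auto simp: m_def)
  have supp: "supp (no_disclosure P) = (\<lambda>r. (r, m)) ` {r. P r \<noteq> 0}"
    by (auto simp: supp_def no_disclosure_def m_def split: if_splits)
  have "revenue (no_disclosure P) = (\<Sum>r\<in>{r. P r \<noteq> 0}. P r * point_rev (r, m))"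
    unfolding revenue_def supp by (subst sum.reindex) (auto simp: inj_on_def no_disclosure_def m_def)
  also have "\<dots> = (\<Sum>r\<in>{r. P r \<noteq> 0}. P r * comp 1 r) * (snd m / fst m)"
    by (simp add: point_rev_first_wins[OF m_first_wins] sum_distrib_right comp_def)
       (simp add: sum_divide_distrib[symmetric] sum_distrib_left[symmetric] ac_simps)
  also have "\<dots> = snd m" using m_first_wins by (simp add: prior_mean_def m_def)
  finally show ?thesis by (simp add: m_def)
qed

lemma support_prior:
  assumes "R \<noteq> R'" "0 < p" "p < 1"
  shows "{r. prior p R R' r \<noteq> 0} = {R, R'}"
  using assms by (auto simp: prior_def)

lemma prior_mean_prior:
  assumes "R \<noteq> R'" "0 < p" "p < 1"
  shows "prior_mean (prior p R R') i = p * comp i R + (1 - p) * comp i R'"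
  using assms unfolding prior_mean_def support_prior[OF assms] by (simp add: prior_def)

lemma revenue_disclosure_prior:
  assumes "0 < p" "p < 1" "R \<noteq> R'"
    and "0 \<le> snd R" "snd R < fst R" "0 \<le> snd R'" "snd R' < fst R'"
  shows "revenue (full_disclosure (prior p R R')) = prior_mean (prior p R R') 2"
    and "revenue (no_disclosure (prior p R R')) = prior_mean (prior p R R') 2"
proof -
  have fin: "finite {r. prior p R R' r \<noteq> 0}" using assms by (simp add: support_prior)
  show "revenue (full_disclosure (prior p R R')) = prior_mean (prior p R R') 2"
  proof (rule revenue_full_disclosure[OF fin])
    fix r assume "prior p R R' r \<noteq> 0"
    then have "r = R \<or> r = R'" using support_prior[OF assms(3,1,2)] by blast
    then show "0 \<le> snd r \<and> snd r < fst r" using assms by auto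
  qed
  have "p * snd R < p * fst R" "(1 - p) * snd R' < (1 - p) * fst R'"
    "0 \<le> p * snd R" "0 \<le> (1 - p) * snd R'"
    using assms by simp_all
  then have "0 \<le> prior_mean (prior p R R') 2"
    "prior_mean (prior p R R') 2 < prior_mean (prior p R R') 1"
    unfolding prior_mean_prior[OF assms(3,1,2)] comp_def by simp_all
  then show "revenue (no_disclosure (prior p R R')) = prior_mean (prior p R R') 2"
    by (rule revenue_no_disclosure[OF fin])
qed

lemma supp_four_deltas:
  assumes "distinct [a, b, c, d]" "ma \<noteq> 0" "mb \<noteq> 0" "mc \<noteq> 0" "md \<noteq> 0"
  shows "supp (\<lambda>w. delta a ma w + delta b mb w + delta c mc w + delta d md w) = {a, b, c, d}"
  using assms by (auto simp: supp_def delta_def)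

lemma sum_supp_four_deltas:
  assumes "distinct [a, b, c, d]" "ma \<noteq> 0" "mb \<noteq> 0" "mc \<noteq> 0" "md \<noteq> 0"
  defines "\<mu> \<equiv> \<lambda>w. delta a ma w + delta b mb w + delta c mc w + delta d md w"
  shows "(\<Sum>w\<in>supp \<mu>. f w) = f a + f b + f c + f d"
  using assms unfolding \<mu>_def supp_four_deltas[OF assms(1-5)] by (simp add: add.assoc)

locale bundling_scheme =
  fixes p q q' r1 r2 r1' r2' :: real
  assumes q_pos: "0 < q" and q_less: "q < p"
    and q'_pos: "0 < q'" and q'_less: "q' < 1 - p"
    and ctr_order: "r2 < r2'" "r2' < r1'" "r1' < r1"
    and ctr_range: "0 \<le> r2" "r1 \<le> 1"
    and moved_mass_small: "(1 - p) * q + p * q' < p * (1 - p)"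
    \<comment> \<open>i.e. q/p + q'/(1 - p) < 1, which is exactly what makes x < y\<close>
begin

definition x :: real where "x = ((p - q) * r2 + q' * r2') / (p - q + q')"
definition y :: real where "y = (q * r2 + (1 - p - q') * r2') / (q + (1 - p) - q')"
definition z :: real where "z = (q * r1 + q' * r1') / (q + q')"

definition A :: point where "A = ((r1, r2), (r1, x))"
definition B :: point where "B = ((r1, r2), (z, y))"
definition C :: point where "C = ((r1', r2'), (z, x))"
definition D :: point where "D = ((r1', r2'), (r1', y))"

definition \<mu> :: dist where
  "\<mu> = (\<lambda>w. delta A (p - q) w + delta B q w + delta C q' w + delta D (1 - p - q') w)"

abbreviation P :: "vec2 \<Rightarrow> real" where "P \<equiv> prior p (r1, r2) (r1', r2')"

lemma weights_pos: "0 < p - q" "0 < 1 - p - q'" "0 < p - q + q'" "0 < q + (1 - p) - q'" "0 < q + q'"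
  using q_pos q_less q'_pos q'_less by auto

lemma x_calibration: "(p - q + q') * x = (p - q) * r2 + q' * r2'"
  using weights_pos by (simp add: x_def)

lemma y_calibration: "(q + (1 - p) - q') * y = q * r2 + (1 - p - q') * r2'"
  using weights_pos by (simp add: y_def)

lemma z_calibration: "(q + q') * z = q * r1 + q' * r1'"
  using weights_pos by (simp add: z_def)

lemma y_minus_x:
  "(p - q + q') * (q + (1 - p) - q') * (y - x) = (p * (1 - p) - (1 - p) * q - p * q') * (r2' - r2)"
proof -
  have "(p - q + q') * (q + (1 - p) - q') * (y - x)
      = (p - q + q') * ((q + (1 - p) - q') * y) - (q + (1 - p) - q') * ((p - q + q') * x)"
    by (simp add: algebra_simps)
  also have "\<dots> = (p * (1 - p) - (1 - p) * q - p * q') * (r2' - r2)"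
    unfolding x_calibration y_calibration by (simp add: algebra_simps)
  finally show ?thesis .
qed

lemma x_less_y: "x < y"
proof -
  have "0 < (p * (1 - p) - (1 - p) * q - p * q') * (r2' - r2)"
    using moved_mass_small ctr_order by simp
  then have "0 < (p - q + q') * (q + (1 - p) - q') * (y - x)" by (simp only: y_minus_x)
  moreover have "0 < (p - q + q') * (q + (1 - p) - q')" using weights_pos by simp
  ultimately show ?thesis using zero_less_mult_pos by (metis diff_gt_0_iff_gt)
qed

lemma signal_bounds: "r2 < x" "y < r2'" "r1' < z" "z < r1"
proof -
  have "(p - q + q') * r2 < (p - q + q') * x"
    using x_calibration q'_pos ctr_order by (simp add: algebra_simps)
  then show "r2 < x" using weights_pos by simp
  have "(q + (1 - p) - q') * y < (q + (1 - p) - q') * r2'"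
    using y_calibration q_pos ctr_order by (simp add: algebra_simps)
  then show "y < r2'" using weights_pos(4) mult_less_cancel_left_pos by blast
  have "(q + q') * r1' < (q + q') * z" "(q + q') * z < (q + q') * r1"
    using z_calibration q_pos q'_pos ctr_order by (simp_all add: algebra_simps)
  then show "r1' < z" "z < r1" using weights_pos by simp_all
qed

lemma y_le_z: "y \<le> z"
  using signal_bounds ctr_order by linarith

lemma points_distinct: "distinct [A, B, C, D]"
  using signal_bounds ctr_order x_less_y by (auto simp: A_def B_def C_def D_def)

lemma sum_supp_\<mu>: "(\<Sum>w\<in>supp \<mu>. f w) = f A + f B + f C + f D"
  unfolding \<mu>_def using points_distinct weights_pos q_pos q'_pos
  by (intro sum_supp_four_deltas) auto

lemma supp_\<mu>: "supp \<mu> = {A, B, C, D}"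
  unfolding \<mu>_def using points_distinct weights_pos q_pos q'_pos
  by (intro supp_four_deltas) auto

lemma \<mu>_at_points: "\<mu> A = p - q" "\<mu> B = q" "\<mu> C = q'" "\<mu> D = 1 - p - q'"
  using points_distinct by (auto simp: \<mu>_def delta_def)

lemma info_structure: "is_info_structure P \<mu>"
  unfolding is_info_structure_def
proof (intro conjI allI)
  show "finite (supp \<mu>)" by (simp add: supp_\<mu>)
  show "0 \<le> \<mu> w" for w using weights_pos q_pos q'_pos by (simp add: \<mu>_def delta_def)
  show "\<forall>w\<in>supp \<mu>. in01 (fst w) \<and> in01 (snd w)"
    using signal_bounds x_less_y ctr_order ctr_range
    by (auto simp: supp_\<mu> A_def B_def C_def D_def in01_def)
  show "(\<Sum>w\<in>supp \<mu>. if fst w = r then \<mu> w else 0) = P r" for r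
    unfolding sum_supp_\<mu> \<mu>_at_points using ctr_order by (auto simp: prior_def A_def B_def C_def D_def)
qed

lemma calibrated: "calibrated \<mu>"
  unfolding calibrated_def
proof (intro ballI allI impI)
  fix i :: nat and t assume "i \<in> {1, 2}"
  then consider "i = 1" | "i = 2" by auto
  then show "(\<Sum>w\<in>supp \<mu>. if comp i (snd w) = t then \<mu> w * comp i (fst w) else 0) =
       t * (\<Sum>w\<in>supp \<mu>. if comp i (snd w) = t then \<mu> w else 0)"
  proof cases
    case 1
    show ?thesis unfolding sum_supp_\<mu> \<mu>_at_points
      using signal_bounds ctr_order z_calibration
      by (cases "t = r1"; cases "t = z"; cases "t = r1'")
        (auto simp: 1 A_def B_def C_def D_def comp_def algebra_simps)
  next
    case 2
    show ?thesis unfolding sum_supp_\<mu> \<mu>_at_points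
      using x_less_y x_calibration y_calibration
      by (cases "t = x"; cases "t = y") (auto simp: 2 A_def B_def C_def D_def comp_def algebra_simps)
  qed
qed

lemma partially_bundled_first: "partially_bundled \<mu> 1"
  unfolding partially_bundled_def unbundled_def fully_bundled_def
proof
  show "\<not> (\<forall>w\<in>supp \<mu>. comp 1 (snd w) = comp 1 (fst w))"
    using signal_bounds by (auto simp: supp_\<mu> B_def comp_def)
  show "\<not> (\<forall>w\<in>supp \<mu>. comp 1 (snd w) = Ectr \<mu> 1)"
    using ctr_order by (auto simp: supp_\<mu> A_def D_def comp_def)
qed

lemma partially_bundled_second: "partially_bundled \<mu> 2"
  unfolding partially_bundled_def unbundled_def fully_bundled_def
proof
  show "\<not> (\<forall>w\<in>supp \<mu>. comp 2 (snd w) = comp 2 (fst w))"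
    using signal_bounds by (auto simp: supp_\<mu> A_def comp_def)
  show "\<not> (\<forall>w\<in>supp \<mu>. comp 2 (snd w) = Ectr \<mu> 2)"
    using x_less_y by (auto simp: supp_\<mu> A_def B_def comp_def)
qed

lemma prior_mean_second: "prior_mean P 2 = (p - q + q') * x + (q + (1 - p) - q') * y"
proof -
  have "prior_mean P 2 = p * r2 + (1 - p) * r2'"
    using ctr_order q_pos q_less q'_pos q'_less by (simp add: prior_mean_prior comp_def)
  also have "\<dots> = (p - q + q') * x + (q + (1 - p) - q') * y"
    unfolding x_calibration y_calibration by (simp add: algebra_simps)
  finally show ?thesis .
qed

lemma revenue_\<mu>: "revenue \<mu> = (p - q) * x + q * (r1 * (y / z)) + q' * (r1' * (x / z)) + (1 - p - q') * y"
proof -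
  have "r2' < r1" "0 < r1'" "0 < z" using signal_bounds ctr_order ctr_range by linarith+
  then show ?thesis
    unfolding revenue_def sum_supp_\<mu> \<mu>_at_points using signal_bounds x_less_y ctr_order
    by (simp add: A_def B_def C_def D_def point_rev_first_wins)
qed

lemma revenue_gain:
  "(q + q') * z * (revenue \<mu> - prior_mean P 2) = q * q' * (r1 - r1') * (y - x)"
proof -
  have "0 < z" using signal_bounds ctr_order ctr_range by linarith
  then have "(q + q') * z * (revenue \<mu> - prior_mean P 2)
      = (q + q') * (q * r1 * y + q' * r1' * x) - ((q + q') * z) * (q' * x + q * y)"
    unfolding revenue_\<mu> prior_mean_second by (simp add: field_simps)
  also have "\<dots> = q * q' * (r1 - r1') * (y - x)"
    unfolding z_calibration by (simp add: algebra_simps)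
  finally show ?thesis .
qed

lemma revenue_exceeds_prior_mean: "prior_mean P 2 < revenue \<mu>"
proof -
  have "0 < q * q' * (r1 - r1') * (y - x)" using q_pos q'_pos ctr_order x_less_y by simp
  moreover have "0 < (q + q') * z" using weights_pos signal_bounds ctr_order ctr_range by simp
  ultimately have "0 < revenue \<mu> - prior_mean P 2"
    using revenue_gain zero_less_mult_pos by metis
  then show ?thesis by simp
qed

lemma revenue_beats_disclosure:
  "revenue (full_disclosure P) < revenue \<mu>" "revenue (no_disclosure P) < revenue \<mu>"
  using revenue_disclosure_prior[of p "(r1, r2)" "(r1', r2')"] revenue_exceeds_prior_mean
    q_pos q_less q'_pos q'_less ctr_order ctr_range
  by auto

end

theorem mainTheorem10:
  fixes p r1 r2 r1' r2' :: real
  assumes "0 < p" "p < 1"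
    and "r1 > r1'" "r1' > r2'" "r2' > r2"
    and "0 \<le> r2" "r1 \<le> 1"
  shows "\<exists>q q'. 0 < q \<and> q < p \<and> 0 < q' \<and> q' < 1 - p \<and>
    (let p' = 1 - p;
         x = ((p - q) * r2 + q' * r2') / (p - q + q');
         y = (q * r2 + (p' - q') * r2') / (q + p' - q');
         z = (q * r1 + q' * r1') / (q + q');
         P = prior p (r1, r2) (r1', r2');
         \<mu> = (\<lambda>w. delta ((r1, r2), (r1, x)) (p - q) w
                + delta ((r1, r2), (z, y)) q w
                + delta ((r1', r2'), (z, x)) q' w
                + delta ((r1', r2'), (r1', y)) (p' - q') w)
     in x < y \<and> y \<le> z \<and>
        is_info_structure P \<mu> \<and> calibrated \<mu> \<and>
        partially_bundled \<mu> 1 \<and> partially_bundled \<mu> 2 \<and> interior \<mu> \<and>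
        revenue \<mu> > revenue (full_disclosure P) \<and>
        revenue \<mu> > revenue (no_disclosure P))"
proof -
  define q where "q = p / 2"
  define q' where "q' = (1 - p) / 4"
  have "(1 - p) * q + p * q' = 3 / 4 * (p * (1 - p))" by (simp add: q_def q'_def algebra_simps)
  moreover have "0 < p * (1 - p)" using assms by simp
  ultimately interpret bundling_scheme p q q' r1 r2 r1' r2'
    by unfold_locales (use assms in \<open>simp_all add: q_def q'_def\<close>)
  have "0 < q \<and> q < p \<and> 0 < q' \<and> q' < 1 - p \<and> x < y \<and> y \<le> z \<and>
      is_info_structure P \<mu> \<and> calibrated \<mu> \<and>
      partially_bundled \<mu> 1 \<and> partially_bundled \<mu> 2 \<and> interior \<mu> \<and>
      revenue \<mu> > revenue (full_disclosure P) \<and> revenue \<mu> > revenue (no_disclosure P)"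
    using q_pos q_less q'_pos q'_less x_less_y y_le_z info_structure calibrated
      partially_bundled_first partially_bundled_second revenue_beats_disclosure
    by (simp add: interior_def)
  then show ?thesis
    unfolding Let_def \<mu>_def A_def B_def C_def D_def x_def y_def z_def by blast
qed

end
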